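(* Suppose $g\in\mathcal{B}\setminus\mathcal{B}_0$. Then there exist $\delta\in(0,\pi/8)$, an increasing sequence $(r_n)_n$ in $(0,1)$ with $\lim_{n\to\infty}r_n=1$, and a sequence $(t_n)_n$ in $[0,2\pi)$ such that for every $n\in\mathbb{N}$ and every $t\in[-\delta(1-r_n),\delta(1-r_n)]$, $$(1-r_n)\,|g'(r_ne^{i(t_n+t)})|\ge\delta.$$
   Context: The Bloch space $\mathcal{B}$ consists of analytic $f$ on the unit disk $\mathbb{D}$ with $\sup_{z\in\mathbb{D}}(1-|z|^2)|f'(z)|<\infty$, and the little Bloch space $\mathcal{B}_0$ of those with $\lim_{|z|\to1^-}(1-|z|^2)|f'(z)|=0$. *)

theory Defs
  imports "HOL-Complex_Analysis.Complex_Analysis"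
begin

definition bloch :: "(complex \<Rightarrow> complex) set" where
  "bloch = {f. f holomorphic_on ball 0 1 \<and>
     bdd_above ((\<lambda>z. (1 - (cmod z)\<^sup>2) * cmod (deriv f z)) ` ball 0 1)}"

definition little_bloch :: "(complex \<Rightarrow> complex) set" where
  "little_bloch = {f. f holomorphic_on ball 0 1 \<and>
     (\<forall>\<epsilon>>0. \<exists>\<rho><1. \<forall>z. \<rho> < cmod z \<and> cmod z < 1 \<longrightarrow>
        (1 - (cmod z)\<^sup>2) * cmod (deriv f z) < \<epsilon>)}"

end

theory Submission
  imports Defs
begin

text \<open>
  Since \<open>g\<close> is not in the little Bloch space, there are points \<open>z\<^sub>n\<close> with \<open>|z\<^sub>n| \<rightarrow> 1\<close> increasing
  and \<open>(1 - |z\<^sub>n|) |g'(z\<^sub>n)| \<ge> \<epsilon>/2\<close>. The Bloch bound \<open>|g'(x)| \<le> M/(1 - |x|)\<close> and the Cauchy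
  estimate on a disc of radius \<open>(1 - |z|)/4\<close> give \<open>|g''| \<le> 8M/(1 - |z|)\<^sup>2\<close> near \<open>z\<close>, so \<open>g'\<close>
  changes by at most \<open>8M\<delta>/(1 - |z|)\<close> on the disc of radius \<open>\<delta>(1 - |z|)\<close> around \<open>z\<close>. For
  small \<open>\<delta>\<close> this keeps \<open>(1 - |z\<^sub>n|) |g'|\<close> above \<open>\<delta>\<close> there, in particular on the arc
  \<open>z\<^sub>n cis t\<close>, \<open>|t| \<le> \<delta>(1 - |z\<^sub>n|)\<close>, which lies in that disc.
\<close>

lemma bloch_bound_nonneg:
  assumes "\<And>x. x \<in> ball 0 1 \<Longrightarrow> (1 - (cmod x)\<^sup>2) * cmod (deriv g x) \<le> M"
  shows "0 \<le> M"
  using assms[of 0] norm_ge_zero[of "deriv g 0"] by (simp del: norm_ge_zero)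

lemma bloch_bound:
  assumes "g \<in> bloch"
  obtains M where "0 \<le> M" and "\<And>x. x \<in> ball 0 1 \<Longrightarrow> (1 - (cmod x)\<^sup>2) * cmod (deriv g x) \<le> M"
proof -
  obtain M where M: "\<forall>x\<in>ball 0 1. (1 - (cmod x)\<^sup>2) * cmod (deriv g x) \<le> M"
    using assms unfolding bloch_def bdd_above_def by auto
  then show thesis
    using that bloch_bound_nonneg by blast
qed

lemma bloch_deriv_bound:
  assumes M: "\<And>x. x \<in> ball 0 1 \<Longrightarrow> (1 - (cmod x)\<^sup>2) * cmod (deriv g x) \<le> M"
    and x: "cmod x < 1"
  shows "cmod (deriv g x) \<le> M / (1 - cmod x)"
proof -
  have "(cmod x)\<^sup>2 \<le> cmod x"
    using x by (simp add: power2_eq_square mult_left_le_one_le)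
  then have "(1 - cmod x) * cmod (deriv g x) \<le> (1 - (cmod x)\<^sup>2) * cmod (deriv g x)"
    by (intro mult_right_mono) auto
  also have "\<dots> \<le> M"
    using M x by simp
  finally show ?thesis
    using x by (simp add: pos_le_divide_eq mult.commute)
qed

lemma bloch_second_deriv_bound:
  assumes hol: "g holomorphic_on ball 0 1"
    and M: "\<And>x. x \<in> ball 0 1 \<Longrightarrow> (1 - (cmod x)\<^sup>2) * cmod (deriv g x) \<le> M"
    and z: "cmod z < 1" and w: "w \<in> ball z ((1 - cmod z) / 4)"
  shows "cmod (deriv (deriv g) w) \<le> 8 * M / (1 - cmod z)\<^sup>2"
proof -
  define \<rho> where "\<rho> = (1 - cmod z) / 4"
  have "0 < \<rho>"
    using z by (simp add: \<rho>_def)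
  have "0 \<le> M"
    using M by (rule bloch_bound_nonneg)
  have near: "cmod x \<le> cmod z + (1 - cmod z) / 2" if "x \<in> cball w \<rho>" for x
  proof -
    have "cmod x \<le> cmod z + cmod (x - w) + cmod (w - z)"
      using norm_triangle_sub[of x z] norm_triangle_ineq[of "x - w" "w - z"] by simp
    moreover have "cmod (x - w) \<le> \<rho>" "cmod (w - z) < \<rho>"
      using that w by (simp_all add: \<rho>_def dist_norm norm_minus_commute)
    ultimately show ?thesis
      unfolding \<rho>_def by linarith
  qed
  have "cball w \<rho> \<subseteq> ball 0 1"
  proof
    fix x
    assume "x \<in> cball w \<rho>"
    with near[of x] z have "cmod x < 1"
      by argo
    then show "x \<in> ball 0 1"
      by simp
  qed
  moreover have "deriv g holomorphic_on ball 0 1"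
    using hol by (rule holomorphic_deriv) simp
  ultimately have hol': "deriv g holomorphic_on cball w \<rho>"
    by (rule holomorphic_on_subset[rotated])
  have "cmod ((deriv ^^ 1) (deriv g) w) \<le> fact 1 * (2 * M / (1 - cmod z)) / \<rho> ^ 1"
  proof (rule Cauchy_inequality)
    show "deriv g holomorphic_on ball w \<rho>" "continuous_on (cball w \<rho>) (deriv g)"
      using hol' ball_subset_cball holomorphic_on_subset holomorphic_on_imp_continuous_on
      by blast+
    show "0 < \<rho>" by fact
    fix x
    assume "cmod (w - x) = \<rho>"
    then have "cmod x \<le> cmod z + (1 - cmod z) / 2"
      by (intro near) (simp add: dist_norm)
    then have x: "cmod x < 1" and gap: "(1 - cmod z) / 2 \<le> 1 - cmod x"
      using z by argo+
    have "cmod (deriv g x) \<le> M / (1 - cmod x)"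
      using M x by (rule bloch_deriv_bound)
    also have "\<dots> \<le> M / ((1 - cmod z) / 2)"
      using gap z \<open>0 \<le> M\<close> by (intro divide_left_mono) auto
    finally show "cmod (deriv g x) \<le> 2 * M / (1 - cmod z)"
      by (simp add: ac_simps)
  qed
  also have "\<dots> = 8 * M / (1 - cmod z)\<^sup>2"
    by (simp add: \<rho>_def power2_eq_square)
  finally show ?thesis
    by simp
qed

lemma bloch_deriv_lipschitz:
  assumes hol: "g holomorphic_on ball 0 1"
    and M: "\<And>x. x \<in> ball 0 1 \<Longrightarrow> (1 - (cmod x)\<^sup>2) * cmod (deriv g x) \<le> M"
    and z: "cmod z < 1" and w: "cmod (w - z) \<le> d * (1 - cmod z)" and d: "d < 1/4"
  shows "cmod (deriv g w - deriv g z) \<le> 8 * M * d / (1 - cmod z)"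
proof -
  define S where "S = ball z ((1 - cmod z) / 4)"
  have "0 \<le> M"
    using M by (rule bloch_bound_nonneg)
  have "S \<subseteq> ball 0 1"
  proof
    fix x
    assume "x \<in> S"
    then have "cmod (x - z) < (1 - cmod z) / 4"
      by (simp add: S_def dist_norm norm_minus_commute)
    with norm_triangle_sub[of x z] z have "cmod x < 1"
      by argo
    then show "x \<in> ball 0 1"
      by simp
  qed
  moreover have "deriv g holomorphic_on ball 0 1"
    using hol by (rule holomorphic_deriv) simp
  ultimately have hol': "deriv g holomorphic_on S"
    by (rule holomorphic_on_subset[rotated])
  have "d * (1 - cmod z) < 1/4 * (1 - cmod z)"
    using d z by (intro mult_strict_right_mono) auto
  with w have "w \<in> S"
    by (simp add: S_def dist_norm norm_minus_commute)
  have "cmod (deriv g w - deriv g z) \<le> 8 * M / (1 - cmod z)\<^sup>2 * cmod (w - z)"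
  proof (rule field_differentiable_bound[where S = S and f' = "deriv (deriv g)"])
    show "convex S"
      by (simp add: S_def)
    show "w \<in> S" by fact
    show "z \<in> S"
      using z by (simp add: S_def)
    fix x
    assume "x \<in> S"
    then show "(deriv g has_field_derivative deriv (deriv g) x) (at x within S)"
      using hol' by (auto simp: S_def intro: holomorphic_derivI)
    show "cmod (deriv (deriv g) x) \<le> 8 * M / (1 - cmod z)\<^sup>2"
      using hol M z \<open>x \<in> S\<close> unfolding S_def by (rule bloch_second_deriv_bound)
  qed
  also have "\<dots> \<le> 8 * M / (1 - cmod z)\<^sup>2 * (d * (1 - cmod z))"
    using w \<open>0 \<le> M\<close> by (intro mult_left_mono) auto
  also have "\<dots> = 8 * M * d / (1 - cmod z)"
    using z by (simp add: power2_eq_square)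
  finally show ?thesis .
qed

lemma bloch_deriv_lower_bound_near:
  assumes hol: "g holomorphic_on ball 0 1"
    and M: "\<And>x. x \<in> ball 0 1 \<Longrightarrow> (1 - (cmod x)\<^sup>2) * cmod (deriv g x) \<le> M"
    and z: "cmod z < 1" and big: "\<epsilon> \<le> (1 - (cmod z)\<^sup>2) * cmod (deriv g z)"
    and \<delta>: "\<delta> < 1/4" "2 * (1 + 8 * M) * \<delta> \<le> \<epsilon>"
    and w: "cmod (w - z) \<le> \<delta> * (1 - cmod z)"
  shows "\<delta> \<le> (1 - cmod z) * cmod (deriv g w)"
proof -
  have "1 - (cmod z)\<^sup>2 = (1 - cmod z) * (1 + cmod z)"
    by (simp add: power2_eq_square algebra_simps)
  also have "\<dots> \<le> (1 - cmod z) * 2"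
    using z by (intro mult_left_mono) auto
  also have "\<dots> = 2 * (1 - cmod z)"
    by simp
  finally have "(1 - (cmod z)\<^sup>2) * cmod (deriv g z) \<le> 2 * ((1 - cmod z) * cmod (deriv g z))"
    using mult_right_mono[OF _ norm_ge_zero] by (metis mult.assoc)
  with big have at_z: "\<epsilon> / 2 \<le> (1 - cmod z) * cmod (deriv g z)"
    by linarith
  have "(1 - cmod z) * cmod (deriv g w - deriv g z) \<le> (1 - cmod z) * (8 * M * \<delta> / (1 - cmod z))"
    using bloch_deriv_lipschitz[OF hol M z w \<delta>(1)] z by (intro mult_left_mono) auto
  then have change: "(1 - cmod z) * cmod (deriv g w - deriv g z) \<le> 8 * M * \<delta>"
    using z by simp
  have "(1 - cmod z) * (cmod (deriv g z) - cmod (deriv g w - deriv g z))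
      \<le> (1 - cmod z) * cmod (deriv g w)"
    using z norm_triangle_ineq2[of "deriv g z" "deriv g z - deriv g w"]
    by (intro mult_left_mono) (auto simp: norm_minus_commute)
  then have "(1 - cmod z) * cmod (deriv g z) - (1 - cmod z) * cmod (deriv g w - deriv g z)
      \<le> (1 - cmod z) * cmod (deriv g w)"
    by (simp add: right_diff_distrib)
  moreover have "\<delta> + 8 * M * \<delta> \<le> \<epsilon> / 2"
    using \<delta>(2) by (simp add: algebra_simps)
  ultimately show ?thesis
    using at_z change by linarith
qed

lemma norm_cis_minus_one_le: "cmod (cis t - 1) \<le> \<bar>t\<bar>"
proof -
  have "(cmod (cis t - 1))\<^sup>2 = (cos t - 1)\<^sup>2 + (sin t)\<^sup>2"
    by (simp add: cmod_power2)
  also have "\<dots> = 4 * (sin (t / 2))\<^sup>2"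
    using cos_double_sin[of "t / 2"] by (simp add: power2_diff sin_squared_eq)
  also have "\<dots> \<le> 4 * (t / 2)\<^sup>2"
    using abs_sin_x_le_abs_x[of "t / 2"]
    by (metis abs_ge_zero mult_left_mono power2_abs power_mono zero_le_numeral)
  also have "\<dots> = t\<^sup>2"
    by (simp add: power2_eq_square)
  finally show ?thesis
    using abs_le_square_iff by (metis abs_norm_cancel)
qed

lemma norm_mult_cis_sub_le: "cmod (z * cis t - z) \<le> cmod z * \<bar>t\<bar>"
proof -
  have "z * cis t - z = z * (cis t - 1)"
    by (simp add: algebra_simps)
  then show ?thesis
    using norm_cis_minus_one_le[of t] by (simp add: norm_mult mult_left_mono)
qed

lemma not_little_bloch_sequence:
  assumes "g holomorphic_on ball 0 1" and "g \<notin> little_bloch"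
  obtains \<epsilon> and z :: "nat \<Rightarrow> complex"
  where "0 < \<epsilon>" and "strict_mono (\<lambda>n. cmod (z n))"
    and "\<And>n. 0 < cmod (z n) \<and> cmod (z n) < 1" and "(\<lambda>n. cmod (z n)) \<longlonglongrightarrow> 1"
    and "\<And>n. \<epsilon> \<le> (1 - (cmod (z n))\<^sup>2) * cmod (deriv g (z n))"
proof -
  obtain \<epsilon> where "0 < \<epsilon>"
    and ex: "\<And>\<rho>. \<rho> < 1 \<Longrightarrow> \<exists>z. \<rho> < cmod z \<and> cmod z < 1 \<and> \<epsilon> \<le> (1 - (cmod z)\<^sup>2) * cmod (deriv g z)"
    using assms unfolding little_bloch_def by (auto simp: not_less) (metis not_le)
  define P where "P n z \<longleftrightarrow> 1 - 1 / real (Suc n) < cmod z \<and> cmod z < 1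
      \<and> \<epsilon> \<le> (1 - (cmod z)\<^sup>2) * cmod (deriv g z)" for n z
  have "\<exists>z. P 0 z"
    using ex[of 0] by (simp add: P_def)
  moreover have "\<exists>y. P (Suc n) y \<and> cmod z < cmod y" if "P n z" for n z
    using ex[of "max (cmod z) (1 - 1 / real (Suc (Suc n)))"] that by (auto simp: P_def)
  ultimately obtain z where z: "\<And>n. P n (z n) \<and> cmod (z n) < cmod (z (Suc n))"
    using dependent_nat_choice[of P "\<lambda>_ z y. cmod z < cmod y"] by blast
  have mono: "strict_mono (\<lambda>n. cmod (z n))"
    using z by (simp add: strict_mono_Suc_iff)
  have bounds: "0 < cmod (z n) \<and> cmod (z n) < 1" for n
  proof -
    have "1 / real (Suc n) \<le> 1"
      by simp
    with z[of n] show ?thesis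
      unfolding P_def by linarith
  qed
  have "(\<lambda>n. cmod (z n)) \<longlonglongrightarrow> 1"
  proof (rule tendsto_sandwich[OF _ _ _ tendsto_const])
    show "(\<lambda>n. 1 - 1 / real (Suc n)) \<longlonglongrightarrow> 1"
      using tendsto_diff[OF tendsto_const[of 1] LIMSEQ_inverse_real_of_nat]
      by (simp add: inverse_eq_divide)
    show "\<forall>\<^sub>F n in sequentially. 1 - 1 / real (Suc n) \<le> cmod (z n)"
      using z by (intro always_eventually allI) (simp add: P_def less_imp_le)
    show "\<forall>\<^sub>F n in sequentially. cmod (z n) \<le> 1"
      using bounds by (intro always_eventually allI less_imp_le) blast
  qed
  then show thesis
    using z by (intro that[OF \<open>0 < \<epsilon>\<close> mono bounds]) (simp_all add: P_def)
qed

theorem lemma5p4: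
  fixes g :: "complex \<Rightarrow> complex"
  assumes "g \<in> bloch" and "g \<notin> little_bloch"
  shows "\<exists>(\<delta>::real) (r::nat \<Rightarrow> real) (tt::nat \<Rightarrow> real).
           0 < \<delta> \<and> \<delta> < pi / 8 \<and>
           strict_mono r \<and> (\<forall>n. 0 < r n \<and> r n < 1) \<and> r \<longlonglongrightarrow> 1 \<and>
           (\<forall>n. 0 \<le> tt n \<and> tt n < 2 * pi) \<and>
           (\<forall>n. \<forall>t. - \<delta> * (1 - r n) \<le> t \<and> t \<le> \<delta> * (1 - r n) \<longrightarrow>
              (1 - r n) * cmod (deriv g (complex_of_real (r n) * cis (tt n + t))) \<ge> \<delta>)"
proof -
  have hol: "g holomorphic_on ball 0 1"
    using assms(1) by (simp add: bloch_def)
  obtain M where "0 \<le> M" and M: "\<And>x. x \<in> ball 0 1 \<Longrightarrow> (1 - (cmod x)\<^sup>2) * cmod (deriv g x) \<le> M"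
    using assms(1) bloch_bound by metis
  obtain \<epsilon> z where "0 < \<epsilon>" and mono: "strict_mono (\<lambda>n. cmod (z n))"
    and z: "\<And>n. 0 < cmod (z n) \<and> cmod (z n) < 1" and lim: "(\<lambda>n. cmod (z n)) \<longlonglongrightarrow> 1"
    and big: "\<And>n. \<epsilon> \<le> (1 - (cmod (z n))\<^sup>2) * cmod (deriv g (z n))"
    using not_little_bloch_sequence[OF hol assms(2)] by metis
  define \<delta> where "\<delta> = min (1/8) (\<epsilon> / (2 * (1 + 8 * M)))"
  have "0 < \<delta>"
    using \<open>0 < \<epsilon>\<close> \<open>0 \<le> M\<close> by (simp add: \<delta>_def)
  moreover have "\<delta> \<le> 1/8" "\<delta> \<le> \<epsilon> / (2 * (1 + 8 * M))"
    unfolding \<delta>_def by (rule min.cobounded1, rule min.cobounded2)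
  ultimately have \<delta>: "0 < \<delta>" "\<delta> < pi / 8" "\<delta> < 1/4" "2 * (1 + 8 * M) * \<delta> \<le> \<epsilon>"
    using \<open>0 \<le> M\<close> pi_gt3 by (simp_all add: pos_le_divide_eq mult.commute)
  have "\<delta> \<le> (1 - cmod (z n)) * cmod (deriv g (complex_of_real (cmod (z n)) * cis (Arg2pi (z n) + t)))"
    if "- \<delta> * (1 - cmod (z n)) \<le> t" "t \<le> \<delta> * (1 - cmod (z n))" for n t
  proof (rule bloch_deriv_lower_bound_near[OF hol M _ big \<delta>(3,4)])
    have "z n = complex_of_real (cmod (z n)) * cis (Arg2pi (z n))"
      using Arg2pi[of "z n"] by (simp add: is_Arg_def cis_conv_exp)
    then have "cmod (complex_of_real (cmod (z n)) * cis (Arg2pi (z n) + t) - z n) = cmod (z n * cis t - z n)"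
      by (metis cis_mult mult.assoc)
    also have "\<dots> \<le> cmod (z n) * \<bar>t\<bar>"
      by (rule norm_mult_cis_sub_le)
    also have "\<dots> \<le> \<bar>t\<bar>"
      using z[of n] by (simp add: mult_left_le_one_le)
    also have "\<dots> \<le> \<delta> * (1 - cmod (z n))"
      using that by linarith
    finally show "cmod (complex_of_real (cmod (z n)) * cis (Arg2pi (z n) + t) - z n) \<le> \<delta> * (1 - cmod (z n))" .
  qed (use z in auto)
  then show ?thesis
    using \<delta>(1,2) mono z lim Arg2pi
    by (intro exI[of _ \<delta>] exI[of _ "\<lambda>n. cmod (z n)"] exI[of _ "\<lambda>n. Arg2pi (z n)"]) auto
qed

end
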